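(* For all integers $\alpha,\beta,\gamma,\delta,\epsilon$ with $\alpha,\gamma,\delta>0$, the map $$(h,j,k,m,n)\mapsto\big(\alpha\gamma^2\delta^2h+j\alpha\gamma^2\delta(\delta-1)/2,\ \alpha\gamma\delta j-\alpha\delta\epsilon k-\beta m,\ \alpha\gamma\delta k,\ \gamma m,\ \delta n\big)$$ is an injective group homomorphism from $\mathrm H_{5,3}$ into $\mathrm H_{5,3}(\alpha,\beta,\gamma,\delta,\epsilon)$. Consequently each $\mathrm H_{5,3}(\alpha,\beta,\gamma,\delta,\epsilon)$ (with parameters as in the classification of discrete cocompact subgroups of $\mathrm G_{5,3}$) is isomorphic to a subgroup of every other one.
   Context: For integers $\alpha,\beta,\gamma,\delta,\epsilon$, $\mathrm H_{5,3}(\alpha,\beta,\gamma,\delta,\epsilon)$ denotes $\mathbb Z^5$ with multiplication $$(h,j,k,m,n)(h',j',k',m',n')=\big(h+h'+\gamma nj'+\alpha\gamma m'n(n-1)/2+\beta nm'+\delta mk'+\epsilon nk',\ j+j'+\alpha nm',\ k+k',\ m+m',\ n+n'\big),$$ and $\mathrm H_{5,3}=\mathrm H_{5,3}(1,0,1,1,0)$. It is known (and may be used) that every $\mathrm H_{5,3}(\alpha,\beta,\gamma,\delta,\epsilon)$ with $\alpha,\gamma,\delta>0$ is isomorphic to a subgroup of $\mathrm H_{5,3}$. *)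

theory Defs
  imports "HOL-Algebra.Group"
begin

type_synonym z5 = "int \<times> int \<times> int \<times> int \<times> int"

text \<open>Multiplication of H_{5,3}(alpha,beta,gamma,delta,epsilon) on Z^5.
  Note n*(n-1) is always even, so integer division by 2 is exact.\<close>
definition H53_mult :: "int \<Rightarrow> int \<Rightarrow> int \<Rightarrow> int \<Rightarrow> int \<Rightarrow> z5 \<Rightarrow> z5 \<Rightarrow> z5" where
  "H53_mult \<alpha> \<beta> \<gamma> \<delta> \<epsilon> x y =
     (case x of (h, j, k, m, n) \<Rightarrow> case y of (h', j', k', m', n') \<Rightarrow>
       (h + h' + \<gamma> * n * j' + \<alpha> * \<gamma> * m' * ((n * (n - 1)) div 2) + \<beta> * n * m'
          + \<delta> * m * k' + \<epsilon> * n * k',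
        j + j' + \<alpha> * n * m', k + k', m + m', n + n'))"

definition H53g :: "int \<Rightarrow> int \<Rightarrow> int \<Rightarrow> int \<Rightarrow> int \<Rightarrow> z5 monoid" where
  "H53g \<alpha> \<beta> \<gamma> \<delta> \<epsilon> = \<lparr> carrier = UNIV, mult = H53_mult \<alpha> \<beta> \<gamma> \<delta> \<epsilon>, one = (0, 0, 0, 0, 0) \<rparr>"

definition H53 :: "z5 monoid" where
  "H53 = H53g 1 0 1 1 0"

definition embedH53 :: "int \<Rightarrow> int \<Rightarrow> int \<Rightarrow> int \<Rightarrow> int \<Rightarrow> z5 \<Rightarrow> z5" where
  "embedH53 \<alpha> \<beta> \<gamma> \<delta> \<epsilon> x =
     (case x of (h, j, k, m, n) \<Rightarrow>
       (\<alpha> * \<gamma>^2 * \<delta>^2 * h + j * \<alpha> * \<gamma>^2 * ((\<delta> * (\<delta> - 1)) div 2),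
        \<alpha> * \<gamma> * \<delta> * j - \<alpha> * \<delta> * \<epsilon> * k - \<beta> * m,
        \<alpha> * \<gamma> * \<delta> * k, \<gamma> * m, \<delta> * n))"

end

theory Submission
  imports Defs
begin

text \<open>
  The only nonlinear ingredient is
  \<open>T(n) = n(n-1)/2\<close>, and \<open>T(dn) = d\<^sup>2 T(n) + n T(d)\<close> is what makes \<open>embedH53\<close> multiplicative.
  For the second claim, every \<open>H\<^sub>5\<^sub>,\<^sub>3(\<alpha>,\<beta>,\<gamma>,\<delta>,\<epsilon>)\<close> also embeds into \<open>H\<^sub>5\<^sub>,\<^sub>3\<close>,
  and composing with \<open>embedH53\<close> embeds it into any other one.
\<close>

lemma times_pred_div_2: "2 * ((n::int) * (n - 1) div 2) = n * (n - 1)"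
  by simp

lemma mult_times_pred_div_2:
  "((d::int) * n) * (d * n - 1) div 2 = d\<^sup>2 * (n * (n - 1) div 2) + n * (d * (d - 1) div 2)"
proof -
  have "2 * ((d * n) * (d * n - 1) div 2) = 2 * (d\<^sup>2 * (n * (n - 1) div 2) + n * (d * (d - 1) div 2))"
    unfolding distrib_left times_pred_div_2 mult.left_commute[of 2]
    by (simp add: algebra_simps power2_eq_square)
  then show ?thesis
    by simp
qed

lemma carrier_H53g [simp]: "carrier (H53g a b c d e) = UNIV"
  by (simp add: H53g_def)

lemma hom_H53gI:
  assumes "\<And>x y. f (H53_mult a b c d e x y) = H53_mult a' b' c' d' e' (f x) (f y)"
  shows "f \<in> hom (H53g a b c d e) (H53g a' b' c' d' e')"
  unfolding hom_def H53g_def using assms by simp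

lemma embedH53_mult:
  "embedH53 a b c d e (H53_mult 1 0 1 1 0 x y) =
   H53_mult a b c d e (embedH53 a b c d e x) (embedH53 a b c d e y)"
proof -
  obtain h j k m n where x: "x = (h, j, k, m, n)"
    by (cases x) auto
  obtain h' j' k' m' n' where y: "y = (h', j', k', m', n')"
    by (cases y) auto
  define D where "D = d * (d - 1) div 2"
  define T where "T = n * (n - 1) div 2"
  have "d * n * (d * n - 1) div 2 = d\<^sup>2 * T + n * D"
    unfolding D_def T_def by (rule mult_times_pred_div_2)
  then show ?thesis
    unfolding x y H53_mult_def embedH53_def
    by (simp flip: D_def T_def) (simp add: algebra_simps power2_eq_square)
qed

lemma embedH53_hom: "embedH53 a b c d e \<in> hom H53 (H53g a b c d e)"
  unfolding H53_def by (intro hom_H53gI embedH53_mult)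

lemma inj_embedH53:
  assumes "a \<noteq> 0" "c \<noteq> 0" "d \<noteq> 0"
  shows "inj (embedH53 a b c d e)"
proof (rule injI)
  fix x y
  assume eq: "embedH53 a b c d e x = embedH53 a b c d e y"
  obtain h j k m n where x: "x = (h, j, k, m, n)"
    by (cases x) auto
  obtain h' j' k' m' n' where y: "y = (h', j', k', m', n')"
    by (cases y) auto
  from eq assms have "k = k'" "m = m'" "n = n'"
    unfolding x y embedH53_def by auto
  with eq assms have "j = j'"
    unfolding x y embedH53_def by auto
  with eq assms have "h = h'"
    unfolding x y embedH53_def by auto
  show "x = y"
    unfolding x y using \<open>h = h'\<close> \<open>j = j'\<close> \<open>k = k'\<close> \<open>m = m'\<close> \<open>n = n'\<close> by simp
qed

text \<open>
  On the coordinate generators \<open>H, J, K, M, N\<close> this is \<open>N \<mapsto> N\<^bsup>ac\<^esup>\<close>, \<open>M \<mapsto> M\<^sup>2 J\<^bsup>2b-ac+1\<^esup>\<close>,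
  \<open>K \<mapsto> K\<^bsup>acd\<^esup> J\<^bsup>2e\<^esup>\<close>, \<open>J \<mapsto> J\<^bsup>2c\<^esup>\<close>, \<open>H \<mapsto> H\<^bsup>2ac\<^esup>\<close>, chosen so that the defining commutator
  relations \<open>[N,J] = H\<^sup>c\<close>, \<open>[M,K] = H\<^sup>d\<close>, \<open>[N,K] = H\<^sup>e\<close>, \<open>[N,M] = J\<^sup>a H\<^sup>b\<close> of the source
  survive in \<open>H\<^sub>5\<^sub>,\<^sub>3\<close>.
\<close>
definition H53g_into_H53 :: "int \<Rightarrow> int \<Rightarrow> int \<Rightarrow> int \<Rightarrow> int \<Rightarrow> z5 \<Rightarrow> z5" where
  "H53g_into_H53 a b c d e x = (case x of (h, j, k, m, n) \<Rightarrow>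
     (2 * a * c * h, 2 * c * j + 2 * e * k + (2 * b - a * c + 1) * m, a * c * d * k, 2 * m, a * c * n))"

lemma H53g_into_H53_mult:
  "H53g_into_H53 a b c d e (H53_mult a b c d e x y) =
   H53_mult 1 0 1 1 0 (H53g_into_H53 a b c d e x) (H53g_into_H53 a b c d e y)"
proof -
  obtain h j k m n where x: "x = (h, j, k, m, n)"
    by (cases x) auto
  obtain h' j' k' m' n' where y: "y = (h', j', k', m', n')"
    by (cases y) auto
  define D where "D = a * c * (a * c - 1) div 2"
  define T where "T = n * (n - 1) div 2"
  have "a * c * n * (a * c * n - 1) div 2 = (a * c)\<^sup>2 * T + n * D"
    unfolding D_def T_def by (rule mult_times_pred_div_2)
  moreover have "2 * D = a * c * (a * c - 1)"
    unfolding D_def by (rule times_pred_div_2)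
  ultimately show ?thesis
    unfolding x y H53_mult_def H53g_into_H53_def
    by (simp flip: D_def T_def) (simp add: algebra_simps power2_eq_square, algebra)
qed

lemma H53g_into_H53_hom: "H53g_into_H53 a b c d e \<in> hom (H53g a b c d e) H53"
  unfolding H53_def by (intro hom_H53gI H53g_into_H53_mult)

lemma inj_H53g_into_H53:
  assumes "a \<noteq> 0" "c \<noteq> 0" "d \<noteq> 0"
  shows "inj (H53g_into_H53 a b c d e)"
proof (rule injI)
  fix x y
  assume eq: "H53g_into_H53 a b c d e x = H53g_into_H53 a b c d e y"
  obtain h j k m n where x: "x = (h, j, k, m, n)"
    by (cases x) auto
  obtain h' j' k' m' n' where y: "y = (h', j', k', m', n')"
    by (cases y) auto
  from eq assms have "h = h'" "k = k'" "m = m'" "n = n'"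
    unfolding x y H53g_into_H53_def by auto
  with eq assms have "j = j'"
    unfolding x y H53g_into_H53_def by auto
  show "x = y"
    unfolding x y using \<open>h = h'\<close> \<open>j = j'\<close> \<open>k = k'\<close> \<open>m = m'\<close> \<open>n = n'\<close> by simp
qed

theorem mainTheorem2:
  shows "(\<forall>\<alpha> \<beta> \<gamma> \<delta> \<epsilon> :: int. \<alpha> > 0 \<and> \<gamma> > 0 \<and> \<delta> > 0 \<longrightarrow>
            embedH53 \<alpha> \<beta> \<gamma> \<delta> \<epsilon> \<in> hom H53 (H53g \<alpha> \<beta> \<gamma> \<delta> \<epsilon>) \<and>
            inj_on (embedH53 \<alpha> \<beta> \<gamma> \<delta> \<epsilon>) (carrier H53))
       \<and> (\<forall>\<alpha> \<beta> \<gamma> \<delta> \<epsilon> \<alpha>' \<beta>' \<gamma>' \<delta>' \<epsilon>' :: int.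
            \<alpha> > 0 \<and> \<gamma> > 0 \<and> \<delta> > 0 \<and> \<alpha>' > 0 \<and> \<gamma>' > 0 \<and> \<delta>' > 0 \<longrightarrow>
            (\<exists>g. g \<in> hom (H53g \<alpha> \<beta> \<gamma> \<delta> \<epsilon>) (H53g \<alpha>' \<beta>' \<gamma>' \<delta>' \<epsilon>') \<and>
                 inj_on g (carrier (H53g \<alpha> \<beta> \<gamma> \<delta> \<epsilon>))))"
proof (intro conjI allI impI)
  fix a b c d e :: int
  assume "a > 0 \<and> c > 0 \<and> d > 0"
  then show "embedH53 a b c d e \<in> hom H53 (H53g a b c d e)"
    and "inj_on (embedH53 a b c d e) (carrier H53)"
    by (simp add: embedH53_hom, simp add: inj_embedH53 H53_def)
next
  fix a b c d e a' b' c' d' e' :: int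
  assume "a > 0 \<and> c > 0 \<and> d > 0 \<and> a' > 0 \<and> c' > 0 \<and> d' > 0"
  then have "inj (embedH53 a' b' c' d' e' \<circ> H53g_into_H53 a b c d e)"
    by (simp add: inj_compose inj_embedH53 inj_H53g_into_H53)
  moreover have "embedH53 a' b' c' d' e' \<circ> H53g_into_H53 a b c d e
                   \<in> hom (H53g a b c d e) (H53g a' b' c' d' e')"
    by (rule hom_compose[OF H53g_into_H53_hom embedH53_hom])
  ultimately show "\<exists>g. g \<in> hom (H53g a b c d e) (H53g a' b' c' d' e') \<and>
                 inj_on g (carrier (H53g a b c d e))"
    by auto
qed

end
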